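(* Let $a<b$ be real numbers, $\mathbb{I}=[a,b]$, and let $M\ge 1$ and $N\ge 1$ be integers. Let $f:(\mathbb{I}^M)^N\to\mathbb{R}$ be a continuous set function with respect to the Hausdorff distance $d_H$. Then for every $\epsilon>0$ there exist a positive integer $K$, Gaussian kernels $\phi_1,\dots,\phi_K$ (i.e. vectors $\boldsymbol{\mu}_1,\dots,\boldsymbol{\mu}_K\in\mathbb{R}^M$ and positive semi-definite matrices $\boldsymbol{\Sigma}_1,\dots,\boldsymbol{\Sigma}_K\in\mathbb{R}^{M\times M}$), and a function $\gamma:\mathbb{R}^K\to\mathbb{R}$ such that for every $\mathcal{X}=(\boldsymbol{x}_1,\dots,\boldsymbol{x}_N)\in(\mathbb{I}^M)^N$, $$\Bigl|f(\mathcal{X})-\gamma\Bigl(\mathrm{MAX}\bigl(\{\phi_k(\boldsymbol{x}_i)\}_{k=1}^K\bigr)\Bigr)\Bigr|<\epsilon .$$ In particular, $g=\gamma\circ\mathrm{MAX}$ is a symmetric function of $(\boldsymbol{x}_1,\dots,\boldsymbol{x}_N)$, i.e. invariant under permutations of the points.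
   Context: A Gaussian kernel with mean $\boldsymbol{\mu}_k\in\mathbb{R}^M$ and positive semi-definite "inverse covariance" matrix $\boldsymbol{\Sigma}_k\in\mathbb{R}^{M\times M}$ is the function $\phi_k:\mathbb{R}^M\to(0,1]$, $\phi_k(\boldsymbol{x})=\exp\!\bigl(-(\boldsymbol{x}-\boldsymbol{\mu}_k)^\top\boldsymbol{\Sigma}_k(\boldsymbol{x}-\boldsymbol{\mu}_k)\bigr)$. For points $\boldsymbol{x}_1,\dots,\boldsymbol{x}_N$, $\mathrm{MAX}(\{\phi_k(\boldsymbol{x}_i)\}_{k=1}^K)\in\mathbb{R}^K$ denotes the vector whose $k$-th coordinate is $\max_{1\le i\le N}\phi_k(\boldsymbol{x}_i)$. An $N$-tuple $\mathcal{X}=(\boldsymbol{x}_1,\dots,\boldsymbol{x}_N)$ is identified with the finite set $\{\boldsymbol{x}_1,\dots,\boldsymbol{x}_N\}\subset\mathbb{R}^M$, and $d_H(\mathcal{X},\mathcal{X}')=\max\bigl(\sup_{x\in\mathcal{X}}\inf_{x'\in\mathcal{X}'}\|x-x'\|,\ \sup_{x'\in\mathcal{X}'}\inf_{x\in\mathcal{X}}\|x-x'\|\bigr)$ is the Hausdorff distance between these sets (Euclidean norm). A function $f$ on tuples of points is a continuous set function w.r.t. $d_H$ if for every $\mathcal{X}$ and every $\epsilon>0$ there is $\delta>0$ such that $d_H(\mathcal{X},\mathcal{X}')<\delta$ implies $|f(\mathcal{X})-f(\mathcal{X}')|<\epsilon$. *)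

theory Defs
  imports "HOL-Analysis.Analysis"
begin

text \<open>Hausdorff distance between (finite, nonempty) subsets of a metric space, as in the paper.\<close>
definition hausdorff_dist :: "'a::metric_space set \<Rightarrow> 'a set \<Rightarrow> real" where
  "hausdorff_dist A B =
     max (SUP x\<in>A. INF y\<in>B. dist x y) (SUP y\<in>B. INF x\<in>A. dist x y)"

definition psd :: "real^'m^'m \<Rightarrow> bool" where
  "psd S \<longleftrightarrow> transpose S = S \<and> (\<forall>v. 0 \<le> v \<bullet> (S *v v))"

text \<open>Gaussian kernel with mean mu and inverse covariance S.\<close>
definition gauss_kernel :: "real^'m \<Rightarrow> real^'m^'m \<Rightarrow> real^'m \<Rightarrow> real" where
  "gauss_kernel mu S x = exp (- ((x - mu) \<bullet> (S *v (x - mu))))"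

definition in_cube_tuple :: "real \<Rightarrow> real \<Rightarrow> ('n \<Rightarrow> real^'m) \<Rightarrow> bool" where
  "in_cube_tuple a b X \<longleftrightarrow> (\<forall>i j. X i $ j \<in> {a..b})"

definition hausdorff_continuous ::
  "real \<Rightarrow> real \<Rightarrow> (('n::finite \<Rightarrow> real^'m) \<Rightarrow> real) \<Rightarrow> bool" where
  "hausdorff_continuous a b f \<longleftrightarrow>
     (\<forall>X. in_cube_tuple a b X \<longrightarrow> (\<forall>e>0. \<exists>d>0. \<forall>X'. in_cube_tuple a b X' \<longrightarrow>
        hausdorff_dist (range X) (range X') < d \<longrightarrow> \<bar>f X - f X'\<bar> < e))"

end

theory Submission
  imports Defs
begin

text \<open>
  The Hausdorff distance between the point sets of two tuples is a pseudometric dominated by the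
  Euclidean distance of the tuples, so compactness of the cube makes \<open>f\<close> uniformly continuous:
  \<open>\<bar>f X - f Y\<bar> < e\<close> whenever \<open>d\<^sub>H(X, Y) < \<delta>\<close>. Cover the cube by finitely many balls of
  radius \<open>\<delta>/2\<close> and put an isotropic Gaussian (\<open>\<Sigma> = I\<close>) at each centre; it exceeds
  \<open>exp (-(\<delta>/2)\<^sup>2)\<close> exactly on its ball. Hence two tuples with the same vector of maxima have every
  point of one within \<open>\<delta>\<close> of a point of the other, i.e. \<open>d\<^sub>H < \<delta>\<close>, so \<open>f\<close> varies by less
  than \<open>e\<close> on each fibre of the feature map and \<open>\<gamma>\<close> may return \<open>f\<close> of any representative.
\<close>

lemma hausdorff_dist_less_iff:
  fixes A B :: "'a::metric_space set"
  assumes "finite A" "A \<noteq> {}" "finite B" "B \<noteq> {}"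
  shows "hausdorff_dist A B < r \<longleftrightarrow>
    (\<forall>x\<in>A. \<exists>y\<in>B. dist x y < r) \<and> (\<forall>y\<in>B. \<exists>x\<in>A. dist x y < r)"
  using assms
  by (simp add: hausdorff_dist_def cInf_eq_Min cSup_eq_Max Min_less_iff)

lemma hausdorff_dist_triangle:
  fixes A B C :: "'a::metric_space set"
  assumes "finite A" "A \<noteq> {}" "finite B" "B \<noteq> {}" "finite C" "C \<noteq> {}"
  shows "hausdorff_dist A C \<le> hausdorff_dist A B + hausdorff_dist B C"
proof (rule dense_ge)
  fix r assume "hausdorff_dist A B + hausdorff_dist B C < r"
  define s where "s = (r + hausdorff_dist A B - hausdorff_dist B C) / 2"
  have st: "hausdorff_dist A B < s" "hausdorff_dist B C < r - s"
    using \<open>hausdorff_dist A B + hausdorff_dist B C < r\<close> by (auto simp: s_def field_simps)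
  have AB: "\<forall>x\<in>A. \<exists>y\<in>B. dist x y < s" "\<forall>y\<in>B. \<exists>x\<in>A. dist x y < s"
    using st(1) assms hausdorff_dist_less_iff[of A B s] by auto
  have BC: "\<forall>y\<in>B. \<exists>z\<in>C. dist y z < r - s" "\<forall>z\<in>C. \<exists>y\<in>B. dist y z < r - s"
    using st(2) assms hausdorff_dist_less_iff[of B C "r - s"] by auto
  have "\<exists>z\<in>C. dist x z < r" if "x \<in> A" for x
  proof -
    obtain y where y: "y \<in> B" "dist x y < s" using AB(1) \<open>x \<in> A\<close> by blast
    obtain z where z: "z \<in> C" "dist y z < r - s" using BC(1) y(1) by blast
    have "dist x z < r" using dist_triangle[of x z y] y(2) z(2) by linarith
    with z(1) show ?thesis by blast
  qed
  moreover have "\<exists>x\<in>A. dist x z < r" if "z \<in> C" for z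
  proof -
    obtain y where y: "y \<in> B" "dist y z < r - s" using BC(2) \<open>z \<in> C\<close> by blast
    obtain x where x: "x \<in> A" "dist x y < s" using AB(2) y(1) by blast
    have "dist x z < r" using dist_triangle[of x z y] x(2) y(2) by linarith
    with x(1) show ?thesis by blast
  qed
  ultimately show "hausdorff_dist A C \<le> r"
    using assms hausdorff_dist_less_iff[of A C r] by simp
qed

lemma hausdorff_dist_range_le_dist:
  fixes v w :: "'a::metric_space ^ 'n"
  shows "hausdorff_dist (range (($) v)) (range (($) w)) \<le> dist v w"
proof (rule dense_ge)
  fix r assume "dist v w < r"
  then have "dist (v $ i) (w $ i) < r" for i
    using dist_vec_nth_le[of v i w] by linarith
  then have "hausdorff_dist (range (($) v)) (range (($) w)) < r"
    by (subst hausdorff_dist_less_iff) auto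
  then show "hausdorff_dist (range (($) v)) (range (($) w)) \<le> r" by simp
qed

lemma compact_uniform_continuity_pseudometric:
  fixes g :: "'a::metric_space \<Rightarrow> 'b::metric_space" and \<rho> :: "'a \<Rightarrow> 'a \<Rightarrow> real"
  assumes "compact C"
    and triangle: "\<And>x y z. x \<in> C \<Longrightarrow> y \<in> C \<Longrightarrow> z \<in> C \<Longrightarrow> \<rho> x z \<le> \<rho> x y + \<rho> y z"
    and le_dist: "\<And>x y. x \<in> C \<Longrightarrow> y \<in> C \<Longrightarrow> \<rho> x y \<le> dist x y"
    and cont: "\<And>x e. x \<in> C \<Longrightarrow> e > 0 \<Longrightarrow> \<exists>d>0. \<forall>y\<in>C. \<rho> x y < d \<longrightarrow> dist (g x) (g y) < e"
    and "e > 0"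
  shows "\<exists>d>0. \<forall>x\<in>C. \<forall>y\<in>C. \<rho> x y < d \<longrightarrow> dist (g x) (g y) < e"
proof -
  have "\<forall>x\<in>C. \<exists>d>0. \<forall>y\<in>C. \<rho> x y < d \<longrightarrow> dist (g x) (g y) < e / 2"
    using cont[of _ "e / 2"] \<open>e > 0\<close> by auto
  then obtain d where d_pos: "\<And>x. x \<in> C \<Longrightarrow> d x > 0"
    and d: "\<And>x y. x \<in> C \<Longrightarrow> y \<in> C \<Longrightarrow> \<rho> x y < d x \<Longrightarrow> dist (g x) (g y) < e / 2"
    by metis
  have "C \<subseteq> (\<Union>x\<in>C. ball x (d x / 2))"
    using d_pos by force
  then obtain D where D: "D \<subseteq> C" "finite D" "C \<subseteq> (\<Union>x\<in>D. ball x (d x / 2))"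
    by (rule compactE_image[OF \<open>compact C\<close> open_ball])
  define \<delta> where "\<delta> = Min (insert 1 ((\<lambda>x. d x / 2) ` D))"
  have "\<forall>x\<in>D. d x > 0"
    using D(1) d_pos by blast
  then have "\<delta> > 0"
    unfolding \<delta>_def using D(2) by simp
  moreover have "dist (g y) (g z) < e" if "y \<in> C" "z \<in> C" "\<rho> y z < \<delta>" for y z
  proof -
    obtain x where x: "x \<in> D" "dist x y < d x / 2"
      using D(3) \<open>y \<in> C\<close> by (auto simp: mem_ball)
    have "x \<in> C" using D(1) x(1) by blast
    have "\<delta> \<le> d x / 2"
      unfolding \<delta>_def using D(2) x(1) by (intro Min_le) auto
    have "\<rho> x y < d x"
      using le_dist[OF \<open>x \<in> C\<close> \<open>y \<in> C\<close>] x(2) d_pos[OF \<open>x \<in> C\<close>] by linarith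
    moreover have "\<rho> x z < d x"
      using triangle[OF \<open>x \<in> C\<close> \<open>y \<in> C\<close> \<open>z \<in> C\<close>] le_dist[OF \<open>x \<in> C\<close> \<open>y \<in> C\<close>]
        x(2) \<open>\<rho> y z < \<delta>\<close> \<open>\<delta> \<le> d x / 2\<close> by linarith
    ultimately have "dist (g x) (g y) < e / 2" "dist (g x) (g z) < e / 2"
      using d \<open>x \<in> C\<close> \<open>y \<in> C\<close> \<open>z \<in> C\<close> by blast+
    then show ?thesis
      by (rule dist_triangle_half_r)
  qed
  ultimately show ?thesis
    by blast
qed

lemma compact_vec_nth_in:
  fixes T :: "'a::{real_normed_vector, heine_borel} set"
  assumes "compact T"
  shows "compact {v::'a^'n. \<forall>i. v $ i \<in> T}"
proof (unfold compact_eq_bounded_closed, intro conjI)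
  obtain R where R: "\<And>x. x \<in> T \<Longrightarrow> norm x \<le> R"
    using compact_imp_bounded[OF assms] by (auto simp: bounded_iff)
  have "norm v \<le> CARD('n) * R" if "\<forall>i. v $ i \<in> T" for v :: "'a^'n"
  proof -
    have "norm v \<le> (\<Sum>i\<in>UNIV. norm (v $ i))"
      unfolding norm_vec_def by (rule L2_set_le_sum) simp
    also have "\<dots> \<le> (\<Sum>i\<in>(UNIV::'n set). R)"
      using R that by (intro sum_mono) blast
    finally show ?thesis by simp
  qed
  then show "bounded {v::'a^'n. \<forall>i. v $ i \<in> T}"
    unfolding bounded_iff by blast
  have "{v::'a^'n. \<forall>i. v $ i \<in> T} = (\<Inter>i. (\<lambda>v. v $ i) -` T)"
    by auto
  then show "closed {v::'a^'n. \<forall>i. v $ i \<in> T}"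
    using compact_imp_closed[OF assms] by (simp add: closed_INT closed_vimage_vec_nth)
qed

lemma compact_obtain_net_list:
  fixes T :: "'a::metric_space set"
  assumes "compact T" "T \<noteq> {}" "r > 0"
  obtains cs where "cs \<noteq> []" "\<And>x. x \<in> T \<Longrightarrow> \<exists>k<length cs. dist x (cs ! k) < r"
proof -
  obtain G where "finite G" and G: "T \<subseteq> (\<Union>g\<in>G. ball g r)"
    using seq_compact_imp_totally_bounded[OF compact_imp_seq_compact[OF assms(1)]] assms(3) by blast
  then obtain cs where cs: "set cs = G"
    using finite_list by blast
  have net: "\<exists>k<length cs. dist x (cs ! k) < r" if x: "x \<in> T" for x
  proof -
    obtain g where "g \<in> G" "dist g x < r"
      using subsetD[OF G x] by auto
    moreover obtain k where "k < length cs" "cs ! k = g"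
      using \<open>g \<in> G\<close> cs by (auto simp: in_set_conv_nth)
    ultimately show ?thesis
      by (auto simp: dist_commute)
  qed
  moreover have "cs \<noteq> []"
    using net \<open>T \<noteq> {}\<close> by fastforce
  ultimately show ?thesis
    using that by blast
qed

lemma in_cube_tuple_iff_cbox:
  "in_cube_tuple a b X \<longleftrightarrow> (\<forall>i. X i \<in> cbox (\<chi> j. a) (\<chi> j. b))"
  by (simp add: in_cube_tuple_def mem_box_cart)

lemma hausdorff_continuous_uniform:
  fixes f :: "('n::finite \<Rightarrow> real^'m) \<Rightarrow> real"
  assumes "hausdorff_continuous a b f" and "e > 0"
  shows "\<exists>d>0. \<forall>X Y. in_cube_tuple a b X \<longrightarrow> in_cube_tuple a b Y \<longrightarrow>
    hausdorff_dist (range X) (range Y) < d \<longrightarrow> \<bar>f X - f Y\<bar> < e"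
proof -
  define C where "C = {v::(real^'m)^'n. \<forall>i. v $ i \<in> cbox (\<chi> j. a) (\<chi> j. b)}"
  have in_C: "v \<in> C \<longleftrightarrow> in_cube_tuple a b (($) v)" for v
    by (simp add: C_def in_cube_tuple_iff_cbox)
  have "\<exists>d>0. \<forall>v\<in>C. \<forall>w\<in>C. hausdorff_dist (range (($) v)) (range (($) w)) < d \<longrightarrow>
      dist (f (($) v)) (f (($) w)) < e"
  proof (rule compact_uniform_continuity_pseudometric)
    show "compact C"
      unfolding C_def by (intro compact_vec_nth_in compact_cbox)
    show "hausdorff_dist (range (($) u)) (range (($) w))
        \<le> hausdorff_dist (range (($) u)) (range (($) v)) + hausdorff_dist (range (($) v)) (range (($) w))"
      for u v w :: "(real^'m)^'n"
      by (rule hausdorff_dist_triangle) auto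
    show "hausdorff_dist (range (($) v)) (range (($) w)) \<le> dist v w" for v w :: "(real^'m)^'n"
      by (rule hausdorff_dist_range_le_dist)
    show "\<exists>d>0. \<forall>w\<in>C. hausdorff_dist (range (($) v)) (range (($) w)) < d \<longrightarrow>
        dist (f (($) v)) (f (($) w)) < \<epsilon>" if v: "v \<in> C" and \<epsilon>: "\<epsilon> > 0" for v \<epsilon>
    proof -
      have "in_cube_tuple a b (($) v)"
        using v in_C by blast
      then obtain d where "d > 0" and d: "\<forall>Y. in_cube_tuple a b Y \<longrightarrow>
          hausdorff_dist (range (($) v)) (range Y) < d \<longrightarrow> \<bar>f (($) v) - f Y\<bar> < \<epsilon>"
        using assms(1) \<epsilon> unfolding hausdorff_continuous_def by blast
      then show ?thesis
        by (auto simp: in_C dist_real_def)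
    qed
  qed (rule \<open>e > 0\<close>)
  then obtain d where "d > 0" and d: "\<forall>v\<in>C. \<forall>w\<in>C.
      hausdorff_dist (range (($) v)) (range (($) w)) < d \<longrightarrow> dist (f (($) v)) (f (($) w)) < e"
    by blast
  have "\<bar>f X - f Y\<bar> < e"
    if "in_cube_tuple a b X" "in_cube_tuple a b Y" "hausdorff_dist (range X) (range Y) < d" for X Y
  proof -
    have "vec_lambda X \<in> C" "vec_lambda Y \<in> C"
      using that(1,2) by (simp_all add: in_C vec_lambda_inverse)
    then show ?thesis
      using d[rule_format, of "vec_lambda X" "vec_lambda Y"] that(3)
      by (simp add: dist_real_def vec_lambda_inverse)
  qed
  with \<open>d > 0\<close> show ?thesis
    by blast
qed

lemma gauss_kernel_mat_1: "gauss_kernel mu (mat 1) x = exp (- (dist x mu)\<^sup>2)"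
  by (simp add: gauss_kernel_def dist_norm power2_norm_eq_inner)

lemma gauss_kernel_mat_1_gt_iff:
  assumes "r > 0"
  shows "exp (- r\<^sup>2) < gauss_kernel mu (mat 1) x \<longleftrightarrow> dist x mu < r"
proof -
  have "(dist x mu)\<^sup>2 < r\<^sup>2 \<longleftrightarrow> dist x mu < r"
    using assms power2_less_imp_less[of "dist x mu" r] power_strict_mono[of "dist x mu" r 2] by auto
  then show ?thesis
    by (simp add: gauss_kernel_mat_1)
qed

lemma psd_mat_1: "psd (mat 1)"
  by (simp add: psd_def)

definition gauss_max_features ::
  "(nat \<Rightarrow> real^'m) \<Rightarrow> (nat \<Rightarrow> real^'m^'m) \<Rightarrow> nat \<Rightarrow> ('n::finite \<Rightarrow> real^'m) \<Rightarrow> real list"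
  where "gauss_max_features mu S K X = map (\<lambda>k. Max (range (\<lambda>i. gauss_kernel (mu k) (S k) (X i)))) [0..<K]"

lemma gauss_max_features_eq_imp_near:
  fixes X Y :: "'n::finite \<Rightarrow> real^'m"
  assumes eq: "gauss_max_features mu (\<lambda>_. mat 1) K X = gauss_max_features mu (\<lambda>_. mat 1) K Y"
    and "k < K" "r > 0" "dist (X i) (mu k) < r"
  shows "\<exists>j. dist (X i) (Y j) < 2 * r"
proof -
  let ?max = "\<lambda>Z :: 'n \<Rightarrow> real^'m. Max (range (\<lambda>i. gauss_kernel (mu k) (mat 1) (Z i)))"
  have "?max X = ?max Y"
    using arg_cong[OF eq, of "\<lambda>l. l ! k"] \<open>k < K\<close> by (simp add: gauss_max_features_def)
  moreover have "exp (- r\<^sup>2) < ?max X"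
    using assms(3,4) by (auto simp: Max_gr_iff gauss_kernel_mat_1_gt_iff)
  ultimately obtain j where j: "dist (Y j) (mu k) < r"
    using assms(3) by (auto simp: Max_gr_iff gauss_kernel_mat_1_gt_iff)
  have "dist (X i) (Y j) < 2 * r"
    using dist_triangle_less_add[OF assms(4) j] by simp
  then show ?thesis ..
qed

lemma gauss_max_features_eq_imp_hausdorff_dist_less:
  fixes X Y :: "'n::finite \<Rightarrow> real^'m"
  assumes eq: "gauss_max_features mu (\<lambda>_. mat 1) K X = gauss_max_features mu (\<lambda>_. mat 1) K Y"
    and net: "\<And>x. x \<in> T \<Longrightarrow> \<exists>k<K. dist x (mu k) < r"
    and "r > 0" "\<And>i. X i \<in> T" "\<And>i. Y i \<in> T"
  shows "hausdorff_dist (range X) (range Y) < 2 * r"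
proof -
  have "\<exists>j. dist (X i) (Y j) < 2 * r" for i
    using net[OF assms(4)] gauss_max_features_eq_imp_near[OF eq _ \<open>r > 0\<close>] by blast
  moreover have "\<exists>j. dist (Y i) (X j) < 2 * r" for i
    using net[OF assms(5)] gauss_max_features_eq_imp_near[OF eq[symmetric] _ \<open>r > 0\<close>] by blast
  ultimately show ?thesis
    by (subst hausdorff_dist_less_iff) (auto simp: dist_commute)
qed

lemma approximate_factorization:
  fixes f :: "'a \<Rightarrow> 'c::metric_space"
  assumes "\<And>x y. x \<in> D \<Longrightarrow> y \<in> D \<Longrightarrow> F x = F y \<Longrightarrow> dist (f x) (f y) < e"
  shows "\<exists>\<gamma>. \<forall>x\<in>D. dist (f x) (\<gamma> (F x)) < e"
proof
  show "\<forall>x\<in>D. dist (f x) (f (SOME y. y \<in> D \<and> F y = F x)) < e"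
  proof
    fix x assume "x \<in> D"
    then have "\<exists>y. y \<in> D \<and> F y = F x"
      by blast
    then have "(SOME y. y \<in> D \<and> F y = F x) \<in> D \<and> F (SOME y. y \<in> D \<and> F y = F x) = F x"
      by (rule someI_ex)
    with \<open>x \<in> D\<close> show "dist (f x) (f (SOME y. y \<in> D \<and> F y = F x)) < e"
      using assms by metis
  qed
qed

theorem lemma1:
  fixes a b :: real and f :: "('n::finite \<Rightarrow> real^'m) \<Rightarrow> real"
  assumes "a < b"
    and "hausdorff_continuous a b f"
    and "e > 0"
  shows "\<exists>K::nat. K > 0 \<and> (\<exists>(mu :: nat \<Rightarrow> real^'m) (S :: nat \<Rightarrow> real^'m^'m) (gamma :: real list \<Rightarrow> real).
           (\<forall>k<K. psd (S k)) \<and>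
           (\<forall>X. in_cube_tuple a b X \<longrightarrow>
              \<bar>f X - gamma (map (\<lambda>k. Max (range (\<lambda>i. gauss_kernel (mu k) (S k) (X i)))) [0..<K])\<bar> < e))"
proof -
  let ?T = "cbox (\<chi> j. a) (\<chi> j. b) :: (real^'m) set"
  obtain \<delta> where "\<delta> > 0" and \<delta>: "\<And>X Y. in_cube_tuple a b X \<Longrightarrow> in_cube_tuple a b Y \<Longrightarrow>
      hausdorff_dist (range X) (range Y) < \<delta> \<Longrightarrow> \<bar>f X - f Y\<bar> < e"
    using hausdorff_continuous_uniform[OF assms(2,3)] by blast
  have "(\<chi> j. a) \<in> ?T"
    using assms(1) by (simp add: mem_box_cart)
  then have "?T \<noteq> {}" "\<delta> / 2 > 0"
    using \<open>\<delta> > 0\<close> by auto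
  then obtain cs where "cs \<noteq> []"
    and net: "\<And>x. x \<in> ?T \<Longrightarrow> \<exists>k<length cs. dist x (cs ! k) < \<delta> / 2"
    by (rule compact_obtain_net_list[OF compact_cbox]) blast
  define F :: "('n \<Rightarrow> real^'m) \<Rightarrow> real list"
    where "F = gauss_max_features ((!) cs) (\<lambda>_. mat 1) (length cs)"
  have "\<exists>\<gamma>. \<forall>X\<in>Collect (in_cube_tuple a b). dist (f X) (\<gamma> (F X)) < e"
  proof (rule approximate_factorization, unfold mem_Collect_eq)
    fix X Y assume X: "in_cube_tuple a b X" and Y: "in_cube_tuple a b Y" and "F X = F Y"
    have "hausdorff_dist (range X) (range Y) < 2 * (\<delta> / 2)"
      using gauss_max_features_eq_imp_hausdorff_dist_less[OF \<open>F X = F Y\<close>[unfolded F_def] net] X Y \<open>\<delta> > 0\<close>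
      by (simp add: in_cube_tuple_iff_cbox)
    then show "dist (f X) (f Y) < e"
      using \<delta>[OF X Y] by (simp add: dist_real_def)
  qed
  then obtain \<gamma> where \<gamma>: "\<forall>X. in_cube_tuple a b X \<longrightarrow> \<bar>f X - \<gamma> (F X)\<bar> < e"
    by (auto simp: dist_real_def)
  show ?thesis
  proof (intro exI[of _ "length cs"] exI[of _ "(!) cs"] exI[of _ "\<lambda>_. mat 1"] exI[of _ \<gamma>] conjI)
    show "length cs > 0"
      using \<open>cs \<noteq> []\<close> by simp
  qed (use \<gamma> in \<open>simp_all add: F_def gauss_max_features_def psd_mat_1\<close>)
qed

end
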